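(* Let $M$ be a $\lambda$-term and $\vec x$ a list of $n$ distinct variables with $FV(M)\subseteq\vec x$. The following are equivalent: (1) $\llbracket M\rrbracket_{\vec x}$ is not the zero distributor, i.e. $\llbracket M\rrbracket_{\vec x}(\Delta,a)\neq\emptyset$ for some $\Delta\in(SD)^n$, $a\in D$; (2) the head reduction of $M$ ends; (3) $M$ is head-normalizable.
   Context: $[n]=\{1,\dots,n\}$. Fix a class $\mathcal C$ of functions between finite ordinals equal to one of: all bijections, all injections, all surjections, all functions. For a small category $X$, $SX$ has finite lists of objects of $X$ as objects and morphisms $\langle x_1,\dots,x_n\rangle\to\langle y_1,\dots,y_m\rangle$ the tuples $\langle\alpha,f_1,\dots,f_m\rangle$ with $\alpha:[m]\to[n]$ in $\mathcal C$, $f_i:x_{\alpha(i)}\to y_i$; composite of $\langle\alpha,\vec f\rangle$ then $\langle\beta,\vec g\rangle$ is $\langle\alpha\circ\beta,(g_i\circ f_{\beta(i)})_i\rangle$; tensor $\oplus$ = concatenation, unit $\langle\rangle$. Fix a small category $A$. $D=D_A$ is the colimit of $D_0=A$, $D_{k+1}=(SD_k)^{o}\times D_k\sqcup A$ along canonical inclusions: objects $a::=o\mid\vec a\Rightarrow a$ ($o\in\mathrm{Ob}(A)$); morphisms are those of $A$ and $\langle\alpha,\vec f\rangle\Rightarrow f:(\vec a\Rightarrow a)\to(\vec a'\Rightarrow a')$ for $\langle\alpha,\vec f\rangle:\vec a'\to\vec a$ in $SD$, $f:a\to a'$. $SD=S(D_A)$. Contexts are objects of $(SD)^n$; $\otimes$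 is componentwise concatenation; $\Delta\oplus\langle\vec a\rangle$ appends a component. Denotation $\llbracket M\rrbracket_{\vec x}:((SD)^n)^{o}\times D\to\mathrm{Set}$ for $\vec x=\langle x_1..x_n\rangle\supseteq FV(M)$ (functorial action from hom-functors and coends): $\llbracket x_i\rrbracket_{\vec x}(\Delta,a)=(SD)^n(\Delta,\langle\langle\rangle,\dots,\langle a\rangle,\dots,\langle\rangle\rangle)$ ($\langle a\rangle$ at position $i$); $\llbracket\lambda y.P\rrbracket_{\vec x}(\Delta,a)=\llbracket P\rrbracket_{\vec x\oplus\langle y\rangle}(\Delta\oplus\langle\vec a'\rangle,a')$ if $a=\vec a'\Rightarrow a'$, $\emptyset$ if $a$ atomic; $\llbracket PQ\rrbracket_{\vec x}(\Delta,a)=\int^{\vec a=\langle a_1..a_k\rangle\in SD}\int^{\Gamma_0..\Gamma_k\in(SD)^n}\llbracket P\rrbracket_{\vec x}(\Gamma_0,\vec a\Rightarrow a)\times\prod_{i=1}^k\llbracket Q\rrbracket_{\vec x}(\Gamma_i,a_i)\times(SD)^n(\Delta,\bigotimes_{i=0}^k\Gamma_i)$. Head reduction: $H(M)=M$ if $M=\lambda\vec y.\,y\vec N$ (head-normal form), and $H(M)=\lambda\vec y.\,P[N/x]\vec N$ if $M=\lambda\vec y.(\lambda x.P)N\vec N$; the head reduction of $M$ ends if iterating $H$ reaches a head-normal form. $M$ is head-normalizable if it $\beta$-reduces to a head-normal form. *)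

theory Defs
  imports Main
begin

record ('o, 'm) category =
  Ob   :: "'o set"
  Mor  :: "'m set"
  Dom  :: "'m \<Rightarrow> 'o"
  Cod  :: "'m \<Rightarrow> 'o"
  Idm  :: "'o \<Rightarrow> 'm"
  Comp :: "'m \<Rightarrow> 'm \<Rightarrow> 'm"   (* Comp g f = g o f *)

definition is_category :: "('o, 'm) category \<Rightarrow> bool" where
  "is_category A \<longleftrightarrow>
     (\<forall>f\<in>Mor A. Dom A f \<in> Ob A \<and> Cod A f \<in> Ob A) \<and>
     (\<forall>x\<in>Ob A. Idm A x \<in> Mor A \<and> Dom A (Idm A x) = x \<and> Cod A (Idm A x) = x) \<and>
     (\<forall>f\<in>Mor A. \<forall>g\<in>Mor A. Cod A f = Dom A g \<longrightarrow>
        Comp A g f \<in> Mor A \<and> Dom A (Comp A g f) = Dom A f \<and> Cod A (Comp A g f) = Cod A g) \<and>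
     (\<forall>f\<in>Mor A. Comp A f (Idm A (Dom A f)) = f \<and> Comp A (Idm A (Cod A f)) f = f) \<and>
     (\<forall>f\<in>Mor A. \<forall>g\<in>Mor A. \<forall>h\<in>Mor A. Cod A f = Dom A g \<longrightarrow> Cod A g = Dom A h \<longrightarrow>
        Comp A h (Comp A g f) = Comp A (Comp A h g) f)"

datatype fclass = Bijections | Injections | Surjections | AllFunctions

text \<open>A function [m] -> [n] is represented (0-indexed) by the list al of its
  values: length al = m, and al ! i < n.\<close>
definition inC :: "fclass \<Rightarrow> nat \<Rightarrow> nat \<Rightarrow> nat list \<Rightarrow> bool" where
  "inC c m n al \<longleftrightarrow> length al = m \<and> (\<forall>i<m. al ! i < n) \<and>
     (case c of
        Bijections \<Rightarrow> bij_betw (\<lambda>i. al ! i) {..<m} {..<n}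
      | Injections \<Rightarrow> inj_on (\<lambda>i. al ! i) {..<m}
      | Surjections \<Rightarrow> (\<lambda>i. al ! i) ` {..<m} = {..<n}
      | AllFunctions \<Rightarrow> True)"

section \<open>The category D = D_A\<close>

datatype 'o dty = Atom 'o | Arr "'o dty list" "'o dty"

fun dobj :: "('o, 'm) category \<Rightarrow> 'o dty \<Rightarrow> bool" where
  "dobj A (Atom o') = (o' \<in> Ob A)"
| "dobj A (Arr as b) = ((\<forall>x\<in>set as. dobj A x) \<and> dobj A b)"

datatype 'm dmor = AM 'm | ArrM "nat list" "'m dmor list" "'m dmor"

text \<open>The morphism
  (<alpha, fs> => g) : (bs => b) -> (bs' => b') has <alpha, fs> : bs' -> bs in SD
  (alpha : [length bs] -> [length bs'] in C, fs ! i : bs' ! (alpha i) -> bs ! i)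
  and g : b -> b'.\<close>
inductive dhom :: "fclass \<Rightarrow> ('o, 'm) category \<Rightarrow> 'o dty \<Rightarrow> 'o dty \<Rightarrow> 'm dmor \<Rightarrow> bool"
  for C A where
  dhom_atom: "f \<in> Mor A \<Longrightarrow> Dom A f = x \<Longrightarrow> Cod A f = y \<Longrightarrow> dhom C A (Atom x) (Atom y) (AM f)"
| dhom_arr: "inC C (length bs) (length bs') al \<Longrightarrow> length fs = length bs \<Longrightarrow>
     (\<forall>i<length bs. dhom C A (bs' ! (al ! i)) (bs ! i) (fs ! i)) \<Longrightarrow>
     dhom C A b b' g \<Longrightarrow> dhom C A (Arr bs b) (Arr bs' b') (ArrM al fs g)"

type_synonym 'm sdmor = "nat list \<times> 'm dmor list"

text \<open>SD morphism <alpha, fs> : xs -> ys, alpha : [length ys] -> [length xs] in C,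
  fs ! i : xs ! (alpha i) -> ys ! i.\<close>
definition sdhom :: "fclass \<Rightarrow> ('o, 'm) category \<Rightarrow> 'o dty list \<Rightarrow> 'o dty list \<Rightarrow> 'm sdmor \<Rightarrow> bool" where
  "sdhom C A xs ys h \<longleftrightarrow> inC C (length ys) (length xs) (fst h) \<and> length (snd h) = length ys \<and>
     (\<forall>i<length ys. dhom C A (xs ! (fst h ! i)) (ys ! i) (snd h ! i))"

definition sdobj :: "('o, 'm) category \<Rightarrow> 'o dty list \<Rightarrow> bool" where
  "sdobj A xs \<longleftrightarrow> (\<forall>x\<in>set xs. dobj A x)"

definition is_ctx :: "('o, 'm) category \<Rightarrow> nat \<Rightarrow> 'o dty list list \<Rightarrow> bool" where
  "is_ctx A n G \<longleftrightarrow> length G = n \<and> (\<forall>xs\<in>set G. sdobj A xs)"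

definition ctxhom :: "fclass \<Rightarrow> ('o, 'm) category \<Rightarrow> 'o dty list list \<Rightarrow> 'o dty list list \<Rightarrow> 'm sdmor list \<Rightarrow> bool" where
  "ctxhom C A G G' hs \<longleftrightarrow> length G' = length G \<and> length hs = length G \<and>
     (\<forall>i<length G. sdhom C A (G ! i) (G' ! i) (hs ! i))"

definition ctx_tensor :: "nat \<Rightarrow> 'o dty list list list \<Rightarrow> 'o dty list list" where
  "ctx_tensor n Gs = map (\<lambda>j. concat (map (\<lambda>G. G ! j) Gs)) [0..<n]"

definition single_ctx :: "nat \<Rightarrow> nat \<Rightarrow> 'o dty \<Rightarrow> 'o dty list list" where
  "single_ctx n p a = map (\<lambda>i. if i = p then [a] else []) [0..<n]"

datatype dB = Var nat | App dB dB | Abs dB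

fun closed_at :: "nat \<Rightarrow> dB \<Rightarrow> bool" where
  "closed_at n (Var i) = (i < n)"
| "closed_at n (App s t) = (closed_at n s \<and> closed_at n t)"
| "closed_at n (Abs s) = closed_at (Suc n) s"

fun lift :: "dB \<Rightarrow> nat \<Rightarrow> dB" where
  "lift (Var i) k = (if i < k then Var i else Var (Suc i))"
| "lift (App s t) k = App (lift s k) (lift t k)"
| "lift (Abs s) k = Abs (lift s (Suc k))"

fun subst :: "dB \<Rightarrow> dB \<Rightarrow> nat \<Rightarrow> dB" where
  "subst (Var i) s k = (if k < i then Var (i - 1) else if i = k then s else Var i)"
| "subst (App t u) s k = App (subst t s k) (subst u s k)"
| "subst (Abs t) s k = Abs (subst t (lift s 0) (Suc k))"

inductive beta :: "dB \<Rightarrow> dB \<Rightarrow> bool" where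
  beta_redex: "beta (App (Abs s) t) (subst s t 0)"
| beta_appL: "beta s t \<Longrightarrow> beta (App s u) (App t u)"
| beta_appR: "beta s t \<Longrightarrow> beta (App u s) (App u t)"
| beta_abs: "beta s t \<Longrightarrow> beta (Abs s) (Abs t)"

fun head_var :: "dB \<Rightarrow> bool" where
  "head_var (Var i) = True"
| "head_var (App s t) = head_var s"
| "head_var (Abs s) = False"

fun is_hnf :: "dB \<Rightarrow> bool" where
  "is_hnf (Abs s) = is_hnf s"
| "is_hnf t = head_var t"

fun H :: "dB \<Rightarrow> dB" where
  "H (Var i) = Var i"
| "H (Abs s) = Abs (H s)"
| "H (App (Abs s) t) = subst s t 0"
| "H (App s t) = App (H s) t"

definition head_reduction_ends :: "dB \<Rightarrow> bool" where
  "head_reduction_ends M \<longleftrightarrow> (\<exists>k. is_hnf ((H ^^ k) M))"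

definition head_normalizable :: "dB \<Rightarrow> bool" where
  "head_normalizable M \<longleftrightarrow> (\<exists>N. beta\<^sup>*\<^sup>* M N \<and> is_hnf N)"

section \<open>The denotation (elements, with coends represented by their coproduct presentation)\<close>

datatype ('o, 'm) elem =
    EVar "'m sdmor list"
  | EApp "'o dty list" "'o dty list list list" "('o, 'm) elem" "('o, 'm) elem list" "'m sdmor list"

text \<open>den C A M n D a e: e is a (representative of an) element of [[M]]_x(D, a),
  where x is a context of n variables; de Bruijn index j refers to x at
  0-indexed position n - 1 - j.  For an application the set is the coend
  presented as a quotient of the coproduct of the integrands; here e ranges over
  the coproduct (representatives).\<close>
inductive den :: "fclass \<Rightarrow> ('o, 'm) category \<Rightarrow> dB \<Rightarrow> nat \<Rightarrow> 'o dty list list \<Rightarrow> 'o dty \<Rightarrow> ('o, 'm) elem \<Rightarrow> bool"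
  for C A where
  den_var: "j < n \<Longrightarrow> ctxhom C A D (single_ctx n (n - 1 - j) a) h \<Longrightarrow> den C A (Var j) n D a (EVar h)"
| den_abs: "den C A P (Suc n) (D @ [as]) b e \<Longrightarrow> den C A (Abs P) n D (Arr as b) e"
| den_app: "sdobj A as \<Longrightarrow> length Gs = Suc (length as) \<Longrightarrow> (\<forall>G\<in>set Gs. is_ctx A n G) \<Longrightarrow>
     den C A P n (Gs ! 0) (Arr as a) p \<Longrightarrow> length qs = length as \<Longrightarrow>
     (\<forall>i<length as. den C A Q n (Gs ! Suc i) (as ! i) (qs ! i)) \<Longrightarrow>
     ctxhom C A D (ctx_tensor n Gs) h \<Longrightarrow>
     den C A (App P Q) n D a (EApp as Gs p qs h)"

definition den_nonzero :: "fclass \<Rightarrow> ('o, 'm) category \<Rightarrow> dB \<Rightarrow> nat \<Rightarrow> bool" where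
  "den_nonzero C A M n \<longleftrightarrow> (\<exists>D a. is_ctx A n D \<and> dobj A a \<and> (\<exists>e. den C A M n D a e))"

end

theory Submission
  imports Defs "HOL-Combinatorics.Permutations"
begin

text \<open>
  Whether the denotation is empty does not depend on witnesses: a coend is inhabited iff one of
  its integrands is, and morphisms of D, SD and (SD)^n matter only through the preorders dle,
  sdle and ctxle saying that a hom-set is inhabited. So a nonzero denotation amounts to a
  derivation of the inductive predicate inhabited, a non-idempotent intersection type system.
  Typable terms have terminating head reduction, by a reducibility argument whose candidate at an
  atom is the set of such terms. Conversely, a head normal form is typable (its head variable gets
  an atomic type, which needs a nonempty A), and typability is preserved by beta-expansion: a
  typing of s[t/x] splits into a typing of s, in which x receives the list of types at which t is
  used, and one typing of t for each of these types.
\<close>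

section \<open>Head reduction\<close>

lemma lift_lift: "i < k + 1 \<Longrightarrow> lift (lift t i) (Suc k) = lift (lift t k) i"
  by (induct t arbitrary: i k) auto

lemma lift_subst_lt:
  "i < j + 1 \<Longrightarrow> lift (subst t s j) i = subst (lift t i) (lift s i) (j + 1)"
  by (induct t arbitrary: i j s) (auto simp add: lift_lift)

lemma subst_lift [simp]: "subst (lift t k) s k = t"
  by (induct t arbitrary: k s) simp_all

lemma subst_subst:
  "i < j + 1 \<Longrightarrow> subst (subst t (lift v i) (Suc j)) (subst u v j) i = subst (subst t u i) v j"
  by (induct t arbitrary: i j u v)
    (auto simp add: diff_Suc subst_lift lift_lift[symmetric] lift_subst_lt split: nat.split)

lemma closed_at_lift: "closed_at n t \<Longrightarrow> closed_at (Suc n) (lift t k)"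
  by (induct t arbitrary: n k) auto

lemma closed_at_subst:
  "closed_at (Suc n) s \<Longrightarrow> closed_at n t \<Longrightarrow> k \<le> n \<Longrightarrow> closed_at n (subst s t k)"
  by (induct s arbitrary: n t k) (auto simp: closed_at_lift)

lemma closed_at_beta: "beta M N \<Longrightarrow> closed_at n M \<Longrightarrow> closed_at n N"
  by (induct arbitrary: n rule: beta.induct) (auto intro: closed_at_subst)

lemma closed_at_beta_star:
  "beta\<^sup>*\<^sup>* M N \<Longrightarrow> closed_at n M \<Longrightarrow> closed_at n N"
  by (induct rule: rtranclp_induct) (auto intro: closed_at_beta)

lemma head_var_is_hnf: "head_var M \<Longrightarrow> is_hnf M"
  by (cases M) auto

lemma beta_star_H: "beta\<^sup>*\<^sup>* M (H M)"
proof -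
  have "H M = M \<or> beta M (H M)"
    by (induct M rule: H.induct) (auto intro: beta.intros)
  then show ?thesis by auto
qed

lemma beta_star_funpow_H: "beta\<^sup>*\<^sup>* M ((H ^^ k) M)"
  by (induct k) (auto intro: rtranclp_trans beta_star_H)

lemma head_normalizable_if_head_reduction_ends:
  "head_reduction_ends M \<Longrightarrow> head_normalizable M"
  unfolding head_reduction_ends_def head_normalizable_def using beta_star_funpow_H by blast

lemma head_reduction_ends_if_hnf: "is_hnf M \<Longrightarrow> head_reduction_ends M"
  unfolding head_reduction_ends_def by (metis funpow_0)

lemma head_reduction_ends_H: "head_reduction_ends (H M) \<Longrightarrow> head_reduction_ends M"
  unfolding head_reduction_ends_def by (metis funpow_Suc_right o_apply)

lemma funpow_H_Abs: "(H ^^ k) (Abs P) = Abs ((H ^^ k) P)"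
  by (induct k) auto

lemma head_reduction_ends_Abs: "head_reduction_ends P \<Longrightarrow> head_reduction_ends (Abs P)"
  unfolding head_reduction_ends_def by (simp add: funpow_H_Abs)

lemma H_subst: "\<not> is_hnf P \<Longrightarrow> H (subst P s k) = subst (H P) s k"
proof (induct P arbitrary: s k)
  case (App P Q)
  show ?case
  proof (cases P)
    case (Abs P')
    then show ?thesis using subst_subst[of 0 k P' s Q] by simp
  next
    case (App P1 P2)
    then show ?thesis using App.hyps(1) App.prems by simp
  qed (use App.prems in simp)
qed auto

lemma head_var_subst_Var: "head_var (subst P (Var v) k) \<Longrightarrow> head_var P"
  by (induct P) auto

lemma is_hnf_subst_Var: "is_hnf (subst P (Var v) k) \<Longrightarrow> is_hnf P"
proof (induct P arbitrary: v k)
  case (App P Q)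
  then show ?case using head_var_subst_Var[of "App P Q"] by simp
qed auto

lemma head_reduction_ends_subst_Var:
  assumes "head_reduction_ends (subst P (Var v) j)"
  shows "head_reduction_ends P"
proof -
  have "is_hnf ((H ^^ k) (subst P (Var v) j)) \<Longrightarrow> head_reduction_ends P" for k
  proof (induct k arbitrary: P)
    case 0
    then show ?case using is_hnf_subst_Var head_reduction_ends_if_hnf by simp
  next
    case (Suc k)
    show ?case
    proof (cases "is_hnf P")
      case False
      then have "is_hnf ((H ^^ k) (subst (H P) (Var v) j))"
        using Suc.prems H_subst by (simp add: funpow_Suc_right del: funpow.simps)
      then show ?thesis using Suc.hyps head_reduction_ends_H by blast
    qed (rule head_reduction_ends_if_hnf)
  qed
  then show ?thesis using assms unfolding head_reduction_ends_def by blast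
qed

lemma head_reduction_ends_App_Var:
  assumes "head_reduction_ends (App M (Var v))"
  shows "head_reduction_ends M"
proof -
  have "is_hnf ((H ^^ k) (App M (Var v))) \<Longrightarrow> head_reduction_ends M" for k
  proof (induct k arbitrary: M)
    case 0
    then show ?case by (simp add: head_var_is_hnf head_reduction_ends_if_hnf)
  next
    case (Suc k)
    have step: "is_hnf ((H ^^ k) (H (App M (Var v))))"
      using Suc.prems by (simp only: funpow_Suc_right o_apply)
    show ?case
    proof (cases M)
      case (Abs P)
      then have "is_hnf ((H ^^ k) (subst P (Var v) 0))"
        using step by simp
      then have "head_reduction_ends (subst P (Var v) 0)"
        unfolding head_reduction_ends_def by blast
      then show ?thesis
        unfolding Abs by (rule head_reduction_ends_Abs[OF head_reduction_ends_subst_Var])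
    next
      case (Var i)
      then show ?thesis by (simp add: head_reduction_ends_if_hnf)
    next
      case (App M1 M2)
      then have "is_hnf ((H ^^ k) (App (H M) (Var v)))"
        using step by simp
      then show ?thesis using Suc.hyps head_reduction_ends_H by blast
    qed
  qed
  then show ?thesis using assms unfolding head_reduction_ends_def by blast
qed

lemma H_foldl_App_redex: "H (foldl App (App (Abs P) N) Ns) = foldl App (subst P N 0) Ns"
proof (induct Ns rule: rev_induct)
  case (snoc N' Ns)
  obtain X Y where "foldl App (App (Abs P) N) Ns = App X Y"
    by (cases Ns rule: rev_cases) auto
  then show ?case using snoc by simp
qed simp

lemma inC_iff:
  "inC C m n al \<longleftrightarrow> length al = m \<and>
    (case C of
       Bijections \<Rightarrow> distinct al \<and> set al = {..<n}
     | Injections \<Rightarrow> distinct al \<and> set al \<subseteq> {..<n}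
     | Surjections \<Rightarrow> set al = {..<n}
     | AllFunctions \<Rightarrow> set al \<subseteq> {..<n})"
proof -
  have "length al = m \<Longrightarrow> (\<lambda>i. al ! i) ` {..<m} = set al"
    by (auto simp: set_conv_nth)
  moreover have "length al = m \<Longrightarrow> inj_on (\<lambda>i. al ! i) {..<m} \<longleftrightarrow> distinct al"
    by (auto simp: distinct_conv_nth inj_on_def)
  moreover have "(\<forall>i<length al. al ! i < n) \<longleftrightarrow> set al \<subseteq> {..<n}"
    unfolding subset_iff in_set_conv_nth by auto
  ultimately show ?thesis
    unfolding inC_def bij_betw_def by (cases C) auto
qed

lemma inC_upt: "inC C m m [0..<m]"
  by (cases C) (auto simp: inC_iff)

lemma inC_map_nth:
  assumes "inC C m k al" "inC C k l be"
  shows "inC C m l (map ((!) be) al)"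
proof -
  have len: "length al = m" "length be = k" and sub: "set al \<subseteq> {..<k}"
    using assms by (cases C; auto simp: inC_iff)+
  have img: "(!) be ` {..<k} = set be"
    using len by (auto simp: set_conv_nth)
  then have "set (map ((!) be) al) \<subseteq> set be"
    using sub by auto
  moreover have "set al = {..<k} \<Longrightarrow> set (map ((!) be) al) = set be"
    using img by simp
  moreover have "distinct al \<Longrightarrow> distinct be \<Longrightarrow> distinct (map ((!) be) al)"
    using sub len by (auto simp: distinct_map intro: inj_on_nth)
  ultimately show ?thesis
    using assms len by (cases C) (auto simp: inC_iff)
qed

lemma inC_append:
  assumes "inC C m1 k1 al1" "inC C m2 k2 al2"
  shows "inC C (m1 + m2) (k1 + k2) (al1 @ map (\<lambda>j. j + k1) al2)"
proof -
  have sub: "set al1 \<subseteq> {..<k1}" "set al2 \<subseteq> {..<k2}"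
    using assms by (cases C; auto simp: inC_iff)+
  have shift: "(\<lambda>j. j + k1) ` {..<k2} = {k1..<k1 + k2}"
    by (simp add: lessThan_atLeast0 add.commute)
  have "{..<k1} \<union> {k1..<k1 + k2} = {..<k1 + k2}"
    by auto
  then have "set al1 = {..<k1} \<Longrightarrow> set al2 = {..<k2} \<Longrightarrow>
      set (al1 @ map (\<lambda>j. j + k1) al2) = {..<k1 + k2}"
    using shift by simp
  moreover have "set (al1 @ map (\<lambda>j. j + k1) al2) \<subseteq> {..<k1 + k2}"
    using sub by auto
  moreover have "distinct al1 \<Longrightarrow> distinct al2 \<Longrightarrow> distinct (al1 @ map (\<lambda>j. j + k1) al2)"
    using sub by (auto simp: distinct_map)
  ultimately show ?thesis
    using assms by (cases C) (auto simp: inC_iff)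
qed

lemma inC_permutes: "p permutes {..<m} \<Longrightarrow> inC C m m (map p [0..<m])"
  by (cases C) (auto simp: inC_iff distinct_map permutes_image lessThan_atLeast0[symmetric]
      intro: permutes_inj_on)

lemma inC_take:
  "C = Injections \<or> C = AllFunctions \<Longrightarrow> inC C (m1 + m2) k al \<Longrightarrow> inC C m1 k (take m1 al)"
  by (auto simp: inC_iff) (meson in_set_takeD lessThan_iff subsetD)+

lemma inC_0_surjective:
  "C = Bijections \<or> C = Surjections \<Longrightarrow> inC C 0 k al \<Longrightarrow> k = 0"
  by (auto simp: inC_iff)

section \<open>Existence of morphisms\<close>

definition dle :: "fclass \<Rightarrow> ('o, 'm) category \<Rightarrow> 'o dty \<Rightarrow> 'o dty \<Rightarrow> bool"
  where
  "dle C A x y \<longleftrightarrow> (\<exists>f. dhom C A x y f)"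

definition sdle :: "fclass \<Rightarrow> ('o, 'm) category \<Rightarrow> 'o dty list \<Rightarrow> 'o dty list \<Rightarrow> bool"
  where
  "sdle C A xs ys \<longleftrightarrow> (\<exists>al. inC C (length ys) (length xs) al \<and>
        (\<forall>i<length ys. dle C A (xs ! (al ! i)) (ys ! i)))"

definition ctxle ::
  "fclass \<Rightarrow> ('o, 'm) category \<Rightarrow> 'o dty list list \<Rightarrow> 'o dty list list \<Rightarrow> bool"
  where
  "ctxle C A D E \<longleftrightarrow> list_all2 (sdle C A) D E"

lemma sdle_iff_sdhom: "sdle C A xs ys \<longleftrightarrow> (\<exists>h. sdhom C A xs ys h)"
  unfolding sdle_def dle_def sdhom_def Skolem_list_nth by fastforce

lemma ctxle_iff_ctxhom: "ctxle C A D E \<longleftrightarrow> (\<exists>hs. ctxhom C A D E hs)"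
  unfolding ctxle_def ctxhom_def list_all2_conv_all_nth sdle_iff_sdhom Skolem_list_nth
  by auto

lemma dle_Atom_Atom [simp]:
  "dle C A (Atom x) (Atom y) \<longleftrightarrow> (\<exists>f\<in>Mor A. Dom A f = x \<and> Cod A f = y)"
  unfolding dle_def by (auto elim: dhom.cases intro: dhom_atom)

lemma dle_Arr_Arr [simp]:
  "dle C A (Arr bs b) (Arr bs' b') \<longleftrightarrow> sdle C A bs' bs \<and> dle C A b b'"
proof
  assume "dle C A (Arr bs b) (Arr bs' b')"
  then obtain al fs g where "inC C (length bs) (length bs') al"
    "\<forall>i<length bs. dhom C A (bs' ! (al ! i)) (bs ! i) (fs ! i)" "dhom C A b b' g"
    unfolding dle_def by (auto elim: dhom.cases)
  then show "sdle C A bs' bs \<and> dle C A b b'"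
    unfolding sdle_def dle_def by blast
next
  assume "sdle C A bs' bs \<and> dle C A b b'"
  then obtain al fs g where "inC C (length bs) (length bs') al" "length fs = length bs"
    "\<forall>i<length bs. dhom C A (bs' ! (al ! i)) (bs ! i) (fs ! i)" "dhom C A b b' g"
    unfolding sdle_iff_sdhom sdhom_def dle_def by auto
  then show "dle C A (Arr bs b) (Arr bs' b')"
    unfolding dle_def by (blast intro: dhom_arr)
qed

lemma dle_Atom_Arr [simp]: "\<not> dle C A (Atom x) (Arr bs b)"
  and dle_Arr_Atom [simp]: "\<not> dle C A (Arr bs b) (Atom y)"
  unfolding dle_def by (auto elim: dhom.cases)

lemma dle_refl: "is_category A \<Longrightarrow> dobj A x \<Longrightarrow> dle C A x x"
proof (induct x)
  case (Arr bs b)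
  then have "sdle C A bs bs"
    unfolding sdle_def by (intro exI[of _ "[0..<length bs]"]) (auto simp: inC_upt)
  then show ?case using Arr by simp
qed (auto simp: is_category_def)

lemma sdle_refl: "is_category A \<Longrightarrow> sdobj A xs \<Longrightarrow> sdle C A xs xs"
  unfolding sdle_def sdobj_def
  by (intro exI[of _ "[0..<length xs]"]) (auto simp: inC_upt dle_refl)

lemma ctxle_refl: "is_category A \<Longrightarrow> is_ctx A n D \<Longrightarrow> ctxle C A D D"
  unfolding ctxle_def is_ctx_def by (auto simp: list_all2_conv_all_nth intro: sdle_refl)

lemma sdle_trans_pointwise:
  assumes "sdle C A xs ys" "sdle C A ys zs"
    and trans: "\<And>x y z. y \<in> set ys \<Longrightarrow> dle C A x y \<Longrightarrow> dle C A y z \<Longrightarrow> dle C A x z"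
  shows "sdle C A xs zs"
proof -
  obtain al where al: "inC C (length ys) (length xs) al"
    "\<forall>i<length ys. dle C A (xs ! (al ! i)) (ys ! i)"
    using assms(1) unfolding sdle_def by blast
  obtain be where be: "inC C (length zs) (length ys) be"
    "\<forall>i<length zs. dle C A (ys ! (be ! i)) (zs ! i)"
    using assms(2) unfolding sdle_def by blast
  have "length be = length zs" "\<forall>i<length zs. be ! i < length ys"
    using be(1) unfolding inC_def by auto
  then have "\<forall>i<length zs. dle C A (xs ! (map ((!) al) be ! i)) (zs ! i)"
    using al(2) be(2) trans nth_mem by fastforce
  then show ?thesis
    using inC_map_nth[OF be(1) al(1)] unfolding sdle_def by blast
qed

lemma dle_trans:
  "is_category A \<Longrightarrow> dle C A x y \<Longrightarrow> dle C A y z \<Longrightarrow> dle C A x z"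
proof (induct y arbitrary: x z)
  case (Atom y)
  then obtain x' z' where xz: "x = Atom x'" "z = Atom z'"
    by (cases x; cases z) auto
  with Atom obtain f g where f: "f \<in> Mor A" "Dom A f = x'" "Cod A f = y"
    and g: "g \<in> Mor A" "Dom A g = y" "Cod A g = z'"
    by auto
  have "Comp A g f \<in> Mor A \<and> Dom A (Comp A g f) = x' \<and> Cod A (Comp A g f) = z'"
    using Atom.prems(1) f g unfolding is_category_def by auto
  then show ?case
    using xz by auto
next
  case (Arr bs b)
  from Arr.prems(2,3) obtain bs0 b0 bs2 b2 where xz: "x = Arr bs0 b0" "z = Arr bs2 b2"
    by (cases x; cases z) auto
  have bs: "sdle C A bs2 bs" "sdle C A bs bs0" and b: "dle C A b0 b" "dle C A b b2"
    using Arr.prems(2,3) unfolding xz by auto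
  have "sdle C A bs2 bs0"
    using sdle_trans_pointwise[OF bs] Arr.hyps(1) Arr.prems(1) by blast
  moreover have "dle C A b0 b2"
    using Arr.hyps(2)[OF Arr.prems(1) b] .
  ultimately show ?case
    unfolding xz by simp
qed

lemma sdle_trans:
  "is_category A \<Longrightarrow> sdle C A xs ys \<Longrightarrow> sdle C A ys zs \<Longrightarrow> sdle C A xs zs"
  using sdle_trans_pointwise dle_trans by metis

lemma ctxle_trans:
  "is_category A \<Longrightarrow> ctxle C A D E \<Longrightarrow> ctxle C A E F \<Longrightarrow> ctxle C A D F"
  unfolding ctxle_def list_all2_conv_all_nth using sdle_trans by metis

lemma sdle_Nil: "sdle C A [] []"
  unfolding sdle_def using inC_upt[of C 0] by auto

lemma sdle_append:
  assumes "sdle C A xs1 ys1" "sdle C A xs2 ys2"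
  shows "sdle C A (xs1 @ xs2) (ys1 @ ys2)"
proof -
  obtain al1 where al1: "inC C (length ys1) (length xs1) al1"
    "\<forall>i<length ys1. dle C A (xs1 ! (al1 ! i)) (ys1 ! i)"
    using assms(1) unfolding sdle_def by blast
  obtain al2 where al2: "inC C (length ys2) (length xs2) al2"
    "\<forall>i<length ys2. dle C A (xs2 ! (al2 ! i)) (ys2 ! i)"
    using assms(2) unfolding sdle_def by blast
  have "length al1 = length ys1" "\<forall>i<length ys1. al1 ! i < length xs1"
    "length al2 = length ys2" "\<forall>i<length ys2. al2 ! i < length xs2"
    using al1(1) al2(1) unfolding inC_def by auto
  then have "\<forall>i<length (ys1 @ ys2).
      dle C A ((xs1 @ xs2) ! ((al1 @ map (\<lambda>j. j + length xs1) al2) ! i)) ((ys1 @ ys2) ! i)"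
    using al1(2) al2(2) by (auto simp: nth_append)
  then show ?thesis
    using inC_append[OF al1(1) al2(1)] unfolding sdle_def by auto
qed

lemma sdle_concat:
  "list_all2 (sdle C A) xss yss \<Longrightarrow> sdle C A (concat xss) (concat yss)"
  by (induct rule: list_all2_induct) (auto intro: sdle_append sdle_Nil)

lemma sdle_mset_eq:
  assumes "is_category A" "mset xs = mset ys" "sdobj A ys"
  shows "sdle C A xs ys"
proof -
  obtain p where p: "p permutes {..<length xs}" "permute_list p xs = ys"
    using mset_eq_permutation[of ys xs] assms(2) by metis
  have len: "length ys = length xs"
    using p(2) by auto
  have "\<forall>i<length ys. dle C A (ys ! i) (ys ! i)"
    using dle_refl[OF assms(1)] assms(3) unfolding sdobj_def by simp
  then have "\<forall>i<length ys. dle C A (xs ! (map p [0..<length xs] ! i)) (ys ! i)"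
    using p len by (auto simp: permute_list_nth)
  then show ?thesis
    using inC_permutes[OF p(1)] len unfolding sdle_def by metis
qed

lemma sdle_take:
  assumes "sdle C A xs (ys @ zs)" "C = Injections \<or> C = AllFunctions \<or> zs = []"
  shows "sdle C A xs ys"
proof (cases "zs = []")
  case False
  obtain al where al: "inC C (length ys + length zs) (length xs) al"
    "\<forall>i<length (ys @ zs). dle C A (xs ! (al ! i)) ((ys @ zs) ! i)"
    using assms(1) unfolding sdle_def by auto
  have "\<forall>i<length ys. dle C A (xs ! (take (length ys) al ! i)) (ys ! i)"
    using al(2) by (metis length_append nth_append nth_take trans_less_add1)
  then show ?thesis
    using inC_take[OF _ al(1)] assms(2) False unfolding sdle_def by auto
qed (use assms in simp)

lemma sdle_Nil_right:
  "C = Bijections \<or> C = Surjections \<Longrightarrow> sdle C A xs [] \<Longrightarrow> xs = []"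
  unfolding sdle_def using inC_0_surjective by fastforce

lemma sdle_set:
  "sdle C A xs ys \<Longrightarrow> y \<in> set ys \<Longrightarrow> \<exists>x\<in>set xs. dle C A x y"
  unfolding sdle_def inC_def in_set_conv_nth by (metis nth_mem)

definition insert_at :: "nat \<Rightarrow> 'a \<Rightarrow> 'a list \<Rightarrow> 'a list" where
  "insert_at p x D = take p D @ x # drop p D"

definition remove_at :: "nat \<Rightarrow> 'a list \<Rightarrow> 'a list" where
  "remove_at p D = take p D @ drop (Suc p) D"

lemma length_insert_at [simp]:
  "p \<le> length D \<Longrightarrow> length (insert_at p x D) = Suc (length D)"
  unfolding insert_at_def by simp

lemma nth_insert_at: "p \<le> length D \<Longrightarrow> j < Suc (length D) \<Longrightarrow>
   insert_at p x D ! j = (if j < p then D ! j else if j = p then x else D ! (j - 1))"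
  unfolding insert_at_def by (auto simp: nth_append min_def)

lemma length_remove_at [simp]:
  "p < length D \<Longrightarrow> length (remove_at p D) = length D - 1"
  unfolding remove_at_def by simp

lemma nth_remove_at: "p < length D \<Longrightarrow> j < length D - 1 \<Longrightarrow>
   remove_at p D ! j = (if j < p then D ! j else D ! (Suc j))"
  unfolding remove_at_def by (auto simp: nth_append min_def)

lemma insert_at_append:
  "p \<le> length G \<Longrightarrow> insert_at p x (G @ [g]) = insert_at p x G @ [g]"
  unfolding insert_at_def by simp

lemma insert_at_length: "insert_at (length D) x D = D @ [x]"
  unfolding insert_at_def by simp

lemma remove_at_append: "p < length G \<Longrightarrow> remove_at p (G @ [g]) = remove_at p G @ [g]"
  unfolding remove_at_def by simp

lemma remove_at_last: "length G = Suc n \<Longrightarrow> remove_at n G = take n G"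
  unfolding remove_at_def by simp

lemma list_all2_insert_at:
  "list_all2 P X Y \<Longrightarrow> P x y \<Longrightarrow> list_all2 P (insert_at p x X) (insert_at p y Y)"
  unfolding insert_at_def
  by (intro list_all2_appendI list_all2_takeI list_all2_Cons[THEN iffD2] conjI list_all2_dropI)

lemma list_all2_remove_at:
  "list_all2 P X Y \<Longrightarrow> list_all2 P (remove_at p X) (remove_at p Y)"
  unfolding remove_at_def by (intro list_all2_appendI list_all2_takeI list_all2_dropI)

lemma length_ctx_tensor [simp]: "length (ctx_tensor n Gs) = n"
  unfolding ctx_tensor_def by simp

lemma nth_ctx_tensor:
  "j < n \<Longrightarrow> ctx_tensor n Gs ! j = concat (map (\<lambda>G. G ! j) Gs)"
  unfolding ctx_tensor_def by simp

lemma length_single_ctx [simp]: "length (single_ctx n p a) = n"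
  unfolding single_ctx_def by simp

lemma nth_single_ctx: "j < n \<Longrightarrow> single_ctx n p a ! j = (if j = p then [a] else [])"
  unfolding single_ctx_def by simp

lemma insert_at_single_ctx_less: "j < k \<Longrightarrow> k \<le> n \<Longrightarrow>
  insert_at (n - k) [] (single_ctx n (n - 1 - j) a) = single_ctx (Suc n) (Suc n - 1 - j) a"
  by (rule nth_equalityI) (auto simp: nth_insert_at nth_single_ctx)

lemma insert_at_single_ctx_greater: "k < j \<Longrightarrow> j \<le> n \<Longrightarrow>
  insert_at (n - k) [] (single_ctx n (n - 1 - (j - 1)) a) = single_ctx (Suc n) (Suc n - 1 - j) a"
  by (rule nth_equalityI) (auto simp: nth_insert_at nth_single_ctx)

lemma insert_at_replicate_Nil:
  "k \<le> n \<Longrightarrow> insert_at (n - k) [a] (replicate n []) = single_ctx (Suc n) (Suc n - 1 - k) a"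
  by (rule nth_equalityI) (auto simp: nth_insert_at nth_single_ctx)

lemma remove_at_single_ctx_less: "i < k \<Longrightarrow> k \<le> n \<Longrightarrow>
  remove_at (n - k) (single_ctx (Suc n) (Suc n - 1 - i) a) = single_ctx n (n - 1 - i) a"
  by (rule nth_equalityI) (auto simp: nth_remove_at nth_single_ctx)

lemma remove_at_single_ctx_ge:
  "k \<le> i \<Longrightarrow> Suc i < Suc n \<Longrightarrow> k \<le> n \<Longrightarrow>
  remove_at (n - k) (single_ctx (Suc n) (Suc n - 1 - Suc i) a) = single_ctx n (n - 1 - i) a"
  by (rule nth_equalityI) (auto simp: nth_remove_at nth_single_ctx)

lemma is_ctx_insert_at:
  "is_ctx A n D \<Longrightarrow> sdobj A xs \<Longrightarrow> p \<le> n \<Longrightarrow> is_ctx A (Suc n) (insert_at p xs D)"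
  unfolding is_ctx_def insert_at_def by (auto dest: in_set_takeD in_set_dropD)

lemma is_ctx_remove_at:
  "is_ctx A (Suc n) D \<Longrightarrow> p < Suc n \<Longrightarrow> is_ctx A n (remove_at p D)"
  unfolding is_ctx_def remove_at_def by (auto dest: in_set_takeD in_set_dropD)

lemma is_ctx_take: "is_ctx A (Suc n) D \<Longrightarrow> is_ctx A n (take n D)"
  unfolding is_ctx_def by (auto dest: in_set_takeD)

lemma is_ctx_append:
  "is_ctx A n D \<Longrightarrow> sdobj A xs \<Longrightarrow> is_ctx A (Suc n) (D @ [xs])"
  unfolding is_ctx_def by auto

lemma is_ctx_last: "is_ctx A (Suc n) D \<Longrightarrow> sdobj A (D ! n)"
  unfolding is_ctx_def by auto

lemma is_ctx_replicate: "is_ctx A n (replicate n [])"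
  unfolding is_ctx_def sdobj_def by auto

lemma is_ctx_single_ctx:
  "dobj A a \<Longrightarrow> p < n \<Longrightarrow> is_ctx A n (single_ctx n p a)"
  unfolding is_ctx_def sdobj_def single_ctx_def by auto

lemma is_ctx_ctx_tensor:
  "\<forall>G\<in>set Gs. is_ctx A n G \<Longrightarrow> is_ctx A n (ctx_tensor n Gs)"
  unfolding is_ctx_def ctx_tensor_def sdobj_def by fastforce

lemma ctx_tensor_insert_at:
  assumes "\<forall>x\<in>set L. length (snd x) = n" "p \<le> n"
  shows "ctx_tensor (Suc n) (map (\<lambda>x. insert_at p (fst x) (snd x)) L)
      = insert_at p (concat (map fst L)) (ctx_tensor n (map snd L))"
proof (rule nth_equalityI)
  fix j assume "j < length (ctx_tensor (Suc n) (map (\<lambda>x. insert_at p (fst x) (snd x)) L))"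
  then have j: "j < Suc n" by simp
  have "\<And>x. x \<in> set L \<Longrightarrow> insert_at p (fst x) (snd x) ! j
      = (if j < p then snd x ! j else if j = p then fst x else snd x ! (j - 1))"
    using assms j by (simp add: nth_insert_at)
  then show "ctx_tensor (Suc n) (map (\<lambda>x. insert_at p (fst x) (snd x)) L) ! j
      = insert_at p (concat (map fst L)) (ctx_tensor n (map snd L)) ! j"
    using j assms(2) by (simp add: nth_ctx_tensor nth_insert_at cong: map_cong)
qed (use assms in simp)

lemma remove_at_ctx_tensor:
  assumes "\<forall>G\<in>set Gs. length G = Suc n" "p < Suc n"
  shows "remove_at p (ctx_tensor (Suc n) Gs) = ctx_tensor n (map (remove_at p) Gs)"
proof (rule nth_equalityI)
  fix j assume "j < length (remove_at p (ctx_tensor (Suc n) Gs))"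
  then have j: "j < n" using assms by simp
  have "\<And>G. G \<in> set Gs \<Longrightarrow> remove_at p G ! j = (if j < p then G ! j else G ! Suc j)"
    using assms j by (simp add: nth_remove_at)
  then show "remove_at p (ctx_tensor (Suc n) Gs) ! j = ctx_tensor n (map (remove_at p) Gs) ! j"
    using j assms(2) by (simp add: nth_ctx_tensor nth_remove_at cong: map_cong)
qed (use assms in simp)

lemma take_ctx_tensor: "take n (ctx_tensor (Suc n) Gs) = ctx_tensor n (map (take n) Gs)"
proof (rule nth_equalityI)
  fix i assume "i < length (take n (ctx_tensor (Suc n) Gs))"
  then have i: "i < n" by simp
  then have "map (\<lambda>G. take n G ! i) Gs = map (\<lambda>G. G ! i) Gs" by simp
  then show "take n (ctx_tensor (Suc n) Gs) ! i = ctx_tensor n (map (take n) Gs) ! i"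
    using i by (simp add: nth_ctx_tensor comp_def)
qed simp

lemma ctx_tensor_single: "length D = n \<Longrightarrow> ctx_tensor n [D] = D"
  by (rule nth_equalityI) (simp_all add: nth_ctx_tensor)

lemma ctx_tensor_replicate_Nil: "ctx_tensor n (replicate n [] # Gs) = ctx_tensor n Gs"
  by (rule nth_equalityI) (simp_all add: nth_ctx_tensor)

lemma concat_map_concat:
  "concat (map (\<lambda>Hs. concat (map f Hs)) Hss) = concat (map f (concat Hss))"
  by (induct Hss) simp_all

lemma ctx_tensor_concat: "ctx_tensor n (map (ctx_tensor n) Hss) = ctx_tensor n (concat Hss)"
proof (rule nth_equalityI)
  fix j assume "j < length (ctx_tensor n (map (ctx_tensor n) Hss))"
  then have j: "j < n" by simp
  have "map (\<lambda>G. G ! j) (map (ctx_tensor n) Hss) = map (\<lambda>Hs. concat (map (\<lambda>G. G ! j) Hs)) Hss"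
    using j by (simp add: nth_ctx_tensor)
  then show "ctx_tensor n (map (ctx_tensor n) Hss) ! j = ctx_tensor n (concat Hss) ! j"
    using j by (simp add: nth_ctx_tensor concat_map_concat del: map_map)
qed simp

lemma ctx_tensor_Cons_ctx_tensor: "ctx_tensor n (ctx_tensor n Hs # Gs) = ctx_tensor n (Hs @ Gs)"
  by (rule nth_equalityI) (simp_all add: nth_ctx_tensor)

lemma mset_concat_cong:
  "mset xss = mset yss \<Longrightarrow> mset (concat xss) = mset (concat yss)"
  by (metis mset_concat mset_map sum_mset_sum_list)

lemma mset_concat_heads:
  "mset (concat (map (\<lambda>x. f x # g x) xs)) = mset (map f xs) + mset (concat (map g xs))"
  by (induct xs) auto

lemma ctxle_nth:
  "ctxle C A X Y \<Longrightarrow> j < length Y \<Longrightarrow> sdle C A (X ! j) (Y ! j)"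
  unfolding ctxle_def by (simp add: list_all2_conv_all_nth)

lemma ctxle_remove_at: "ctxle C A X Y \<Longrightarrow> ctxle C A (remove_at p X) (remove_at p Y)"
  unfolding ctxle_def by (rule list_all2_remove_at)

lemma ctxle_ctx_tensor:
  assumes "list_all2 (ctxle C A) Gs Hs" "\<forall>G\<in>set Gs. length G = n"
  shows "ctxle C A (ctx_tensor n Gs) (ctx_tensor n Hs)"
  unfolding ctxle_def
proof (rule list_all2_all_nthI)
  fix j assume "j < length (ctx_tensor n Gs)"
  then have j: "j < n" by simp
  have "list_all2 (sdle C A) (map (\<lambda>G. G ! j) Gs) (map (\<lambda>G. G ! j) Hs)"
    using assms j unfolding ctxle_def list_all2_conv_all_nth by auto
  then show "sdle C A (ctx_tensor n Gs ! j) (ctx_tensor n Hs ! j)"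
    using j by (simp add: nth_ctx_tensor sdle_concat)
qed simp

lemma ctxle_ctx_tensor_mset:
  assumes "is_category A" "mset Gs = mset Hs" "\<forall>H\<in>set Hs. is_ctx A n H"
  shows "ctxle C A (ctx_tensor n Gs) (ctx_tensor n Hs)"
  unfolding ctxle_def
proof (rule list_all2_all_nthI)
  fix j assume "j < length (ctx_tensor n Gs)"
  then have j: "j < n" by simp
  have "mset (map (\<lambda>G. G ! j) Gs) = mset (map (\<lambda>G. G ! j) Hs)"
    using assms(2) by simp
  then have m: "mset (concat (map (\<lambda>G. G ! j) Gs)) = mset (concat (map (\<lambda>G. G ! j) Hs))"
    by (rule mset_concat_cong)
  have "sdobj A (concat (map (\<lambda>G. G ! j) Hs))"
  proof -
    have "\<forall>H\<in>set Hs. \<forall>x\<in>set (H ! j). dobj A x"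
      using assms(3) j unfolding is_ctx_def sdobj_def by (metis nth_mem)
    then show ?thesis unfolding sdobj_def by auto
  qed
  then show "sdle C A (ctx_tensor n Gs ! j) (ctx_tensor n Hs ! j)"
    using j sdle_mset_eq[OF assms(1) m] by (simp add: nth_ctx_tensor)
qed simp

lemma ctxle_ctx_tensor_regroup:
  assumes cat: "is_category A"
    and le: "list_all2 (\<lambda>G Ks. ctxle C A G (ctx_tensor n Ks)) Gs Kss"
    and Gs: "\<forall>G\<in>set Gs. length G = n"
    and mset: "mset (concat Kss) = mset Ls" and Ls: "\<forall>L\<in>set Ls. is_ctx A n L"
  shows "ctxle C A (ctx_tensor n Gs) (ctx_tensor n Ls)"
proof -
  have "list_all2 (ctxle C A) Gs (map (ctx_tensor n) Kss)"
    using le by (simp add: list_all2_conv_all_nth)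
  then have "ctxle C A (ctx_tensor n Gs) (ctx_tensor n (concat Kss))"
    using ctxle_ctx_tensor[OF _ Gs] ctx_tensor_concat by metis
  moreover have "ctxle C A (ctx_tensor n (concat Kss)) (ctx_tensor n Ls)"
    using ctxle_ctx_tensor_mset[OF cat mset Ls] .
  ultimately show ?thesis
    using ctxle_trans[OF cat] by blast
qed

section \<open>Inhabitation of the denotation\<close>

(* In the application rule, ps lists the pairs (a_i, \<Gamma>_i) of the coend. *)
inductive inhabited ::
  "fclass \<Rightarrow> ('o, 'm) category \<Rightarrow> dB \<Rightarrow> nat \<Rightarrow> 'o dty list list \<Rightarrow> 'o dty \<Rightarrow> bool"
  for C A where
  inhabited_Var: "j < n \<Longrightarrow> ctxle C A D (single_ctx n (n - 1 - j) a) \<Longrightarrow> inhabited C A (Var j) n D a"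
| inhabited_Abs: "inhabited C A P (Suc n) (D @ [as]) b \<Longrightarrow> inhabited C A (Abs P) n D (Arr as b)"
| inhabited_App: "is_ctx A n G0 \<Longrightarrow>
     (\<forall>(b, G)\<in>set ps. inhabited C A Q n G b \<and> is_ctx A n G \<and> dobj A b) \<Longrightarrow>
     inhabited C A P n G0 (Arr (map fst ps) a) \<Longrightarrow> ctxle C A D (ctx_tensor n (G0 # map snd ps)) \<Longrightarrow>
     inhabited C A (App P Q) n D a"

abbreviation inhabited_all ::
  "fclass \<Rightarrow> ('o, 'm) category \<Rightarrow> dB \<Rightarrow> nat \<Rightarrow> ('o dty \<times> 'o dty list list) list \<Rightarrow> bool"
  where
  "inhabited_all C A Q n ps \<equiv> \<forall>(b, G)\<in>set ps. inhabited C A Q n G b \<and> is_ctx A n G \<and> dobj A b"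

inductive_cases inhabited_VarE: "inhabited C A (Var j) n D a"

inductive_cases inhabited_AbsE: "inhabited C A (Abs P) n D a"

inductive_cases inhabited_AppE: "inhabited C A (App P Q) n D a"

lemma inhabited_if_den: "den C A M n D a e \<Longrightarrow> inhabited C A M n D a"
proof (induct rule: den.induct)
  case (den_var j n D a h)
  then show ?case using inhabited_Var ctxle_iff_ctxhom by blast
next
  case (den_abs P n D as b e)
  then show ?case by (blast intro: inhabited_Abs)
next
  case (den_app as Gs n P a p qs Q D h)
  define ps where "ps = zip as (tl Gs)"
  have Gs: "Gs = Gs ! 0 # map snd ps" and as: "map fst ps = as"
    using den_app(2) by (cases Gs; simp add: ps_def)+
  have "inhabited_all C A Q n ps"
  proof clarify
    fix b G
    assume "(b, G) \<in> set ps"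
    then obtain i where "i < length as" "b = as ! i" "G = Gs ! Suc i"
      using den_app(2) by (auto simp: ps_def set_zip nth_tl)
    then show "inhabited C A Q n G b \<and> is_ctx A n G \<and> dobj A b"
      using den_app(1,2,3,7) by (simp add: sdobj_def)
  qed
  moreover have "ctxle C A D (ctx_tensor n (Gs ! 0 # map snd ps))"
    using den_app(8) Gs by (auto simp: ctxle_iff_ctxhom)
  ultimately show ?case
    using den_app(2,3,5) as by (intro inhabited_App) auto
qed

lemma den_if_inhabited: "inhabited C A M n D a \<Longrightarrow> \<exists>e. den C A M n D a e"
proof (induct rule: inhabited.induct)
  case (inhabited_Var j n D a)
  then obtain h where "ctxhom C A D (single_ctx n (n - 1 - j) a) h"
    unfolding ctxle_iff_ctxhom by blast
  then show ?case
    using inhabited_Var(1) by (blast intro: den_var)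
next
  case (inhabited_Abs P n D as b)
  then show ?case by (blast intro: den_abs)
next
  case (inhabited_App n G0 ps Q P a D)
  obtain p where "den C A P n G0 (Arr (map fst ps) a) p"
    using inhabited_App(4) by blast
  moreover have "\<forall>i<length ps. \<exists>q. den C A Q n (snd (ps ! i)) (fst (ps ! i)) q"
  proof (intro allI impI)
    fix i
    assume "i < length ps"
    obtain b G where bG: "ps ! i = (b, G)"
      by (cases "ps ! i")
    then have "(b, G) \<in> set ps"
      using \<open>i < length ps\<close> nth_mem by metis
    then have "\<exists>q. den C A Q n G b q"
      using inhabited_App(2) by blast
    then show "\<exists>q. den C A Q n (snd (ps ! i)) (fst (ps ! i)) q"
      using bG by simp
  qed
  then obtain qs where "length qs = length ps"
    "\<forall>i<length ps. den C A Q n (snd (ps ! i)) (fst (ps ! i)) (qs ! i)"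
    unfolding Skolem_list_nth by blast
  moreover obtain h where "ctxhom C A D (ctx_tensor n (G0 # map snd ps)) h"
    using inhabited_App(5) unfolding ctxle_iff_ctxhom by blast
  moreover have "sdobj A (map fst ps)" "\<forall>G\<in>set (G0 # map snd ps). is_ctx A n G"
    using inhabited_App(1,2) unfolding sdobj_def by auto
  ultimately have "den C A (App P Q) n D a (EApp (map fst ps) (G0 # map snd ps) p qs h)"
    by (intro den_app) simp_all
  then show ?case ..
qed

lemma den_nonzero_iff_inhabited:
  "den_nonzero C A M n \<longleftrightarrow> (\<exists>D a. is_ctx A n D \<and> dobj A a \<and> inhabited C A M n D a)"
  unfolding den_nonzero_def using inhabited_if_den den_if_inhabited by blast

lemma inhabited_length: "inhabited C A M n D a \<Longrightarrow> length D = n"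
  by (induct rule: inhabited.induct) (auto simp: ctxle_def list_all2_lengthD)

lemma inhabited_ctxle:
  assumes "is_category A"
  shows "inhabited C A M n D a \<Longrightarrow> is_ctx A n D \<Longrightarrow> dobj A a \<Longrightarrow> ctxle C A D' D \<Longrightarrow> inhabited C A M n D' a"
proof (induct arbitrary: D' rule: inhabited.induct)
  case (inhabited_Var j n D a)
  then show ?case using ctxle_trans[OF assms] by (blast intro: inhabited.inhabited_Var)
next
  case (inhabited_Abs P n D as b)
  have "sdle C A as as"
    using inhabited_Abs(4) sdle_refl[OF assms] by (simp add: sdobj_def)
  then have "ctxle C A (D' @ [as]) (D @ [as])"
    using inhabited_Abs(5) unfolding ctxle_def by (simp add: list_all2_appendI)
  moreover have "is_ctx A (Suc n) (D @ [as])"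
    using inhabited_Abs(3,4) unfolding is_ctx_def sdobj_def by auto
  ultimately show ?case
    using inhabited_Abs by (auto intro: inhabited.inhabited_Abs)
next
  case (inhabited_App n G0 ps Q P a D)
  then show ?case using ctxle_trans[OF assms] by (blast intro: inhabited.inhabited_App)
qed

section \<open>Reducibility\<close>

fun red :: "'o dty \<Rightarrow> dB set" where
  "red (Atom x) = {M. head_reduction_ends M}"
| "red (Arr as b) = {M. \<forall>N. (\<forall>x\<in>set as. N \<in> red x) \<longrightarrow> App M N \<in> red b}"

lemma head_var_in_red: "head_var M \<Longrightarrow> M \<in> red a"
  by (induct a arbitrary: M) (auto simp: head_var_is_hnf head_reduction_ends_if_hnf)

lemma head_reduction_ends_if_red: "M \<in> red a \<Longrightarrow> head_reduction_ends M"
proof (induct a arbitrary: M)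
  case (Arr as b)
  have "\<forall>x\<in>set as. Var 0 \<in> red x"
    by (simp add: head_var_in_red)
  then have "App M (Var 0) \<in> red b"
    using Arr.prems by simp
  then show ?case
    using Arr.hyps(2) head_reduction_ends_App_Var by blast
qed simp

lemma red_expand:
  "foldl App (subst P N 0) Ns \<in> red a \<Longrightarrow> foldl App (App (Abs P) N) Ns \<in> red a"
proof (induct a arbitrary: Ns)
  case (Atom x)
  then show ?case
    using head_reduction_ends_H[of "foldl App (App (Abs P) N) Ns"] by (simp add: H_foldl_App_redex)
next
  case (Arr as b)
  have "App (foldl App (App (Abs P) N) Ns) Q \<in> red b"
    if "\<forall>x\<in>set as. Q \<in> red x" for Q
    using Arr.hyps(2)[of "Ns @ [Q]"] Arr.prems that by simp
  then show ?case by simp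
qed

lemma red_mono: "dhom C A x y f \<Longrightarrow> red x \<subseteq> red y"
proof (induct rule: dhom.induct)
  case (dhom_arr bs bs' al fs b b' g)
  have "\<forall>i<length bs. al ! i < length bs'"
    using dhom_arr(1) unfolding inC_def by auto
  then have "(\<forall>x\<in>set bs'. N \<in> red x) \<Longrightarrow> (\<forall>x\<in>set bs. N \<in> red x)" for N
    using dhom_arr(3) by (fastforce simp: in_set_conv_nth)
  then show ?case
    using dhom_arr(5) by auto
qed simp

lemma red_mono_dle: "dle C A x y \<Longrightarrow> M \<in> red x \<Longrightarrow> M \<in> red y"
  unfolding dle_def using red_mono by blast

abbreviation subst_up :: "(nat \<Rightarrow> dB) \<Rightarrow> nat \<Rightarrow> dB" where
  "subst_up \<sigma> \<equiv> \<lambda>j. case j of 0 \<Rightarrow> Var 0 | Suc i \<Rightarrow> lift (\<sigma> i) 0"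

fun psubst :: "(nat \<Rightarrow> dB) \<Rightarrow> dB \<Rightarrow> dB" where
  "psubst \<sigma> (Var j) = \<sigma> j"
| "psubst \<sigma> (App s t) = App (psubst \<sigma> s) (psubst \<sigma> t)"
| "psubst \<sigma> (Abs s) = Abs (psubst (subst_up \<sigma>) s)"

lemma psubst_subst: "subst (psubst \<sigma> P) N k = psubst (\<lambda>j. subst (\<sigma> j) N k) P"
proof (induct P arbitrary: \<sigma> N k)
  case (Abs P)
  have "(\<lambda>j. subst (subst_up \<sigma> j) (lift N 0) (Suc k)) = subst_up (\<lambda>j. subst (\<sigma> j) N k)"
    by (rule ext) (simp add: lift_subst_lt split: nat.split)
  then show ?case using Abs by simp
qed simp_all

lemma psubst_Var: "psubst Var M = M"
proof -
  have "subst_up Var = Var"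
    by (rule ext) (simp split: nat.split)
  then show ?thesis by (induct M) simp_all
qed

definition red_env :: "(nat \<Rightarrow> dB) \<Rightarrow> nat \<Rightarrow> 'o dty list list \<Rightarrow> bool" where
  "red_env \<sigma> n D \<longleftrightarrow> (\<forall>j<n. \<forall>x\<in>set (D ! (n - 1 - j)). \<sigma> j \<in> red x)"

lemma red_env_ctxle:
  assumes "ctxle C A D E" "length E = n" "red_env \<sigma> n D"
  shows "red_env \<sigma> n E"
  unfolding red_env_def
proof (intro allI impI ballI)
  fix j y
  assume j: "j < n" and y: "y \<in> set (E ! (n - 1 - j))"
  obtain x where "x \<in> set (D ! (n - 1 - j))" "dle C A x y"
    using sdle_set[OF ctxle_nth[OF assms(1)] y] j assms(2) by auto
  then show "\<sigma> j \<in> red y"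
    using assms(3) j red_mono_dle unfolding red_env_def by blast
qed

lemma red_env_ctx_tensor: "red_env \<sigma> n (ctx_tensor n Gs) \<Longrightarrow> G \<in> set Gs \<Longrightarrow> red_env \<sigma> n G"
  unfolding red_env_def by (auto simp: nth_ctx_tensor)

lemma red_env_single_ctx: "red_env \<sigma> n (single_ctx n (n - 1 - j) a) \<Longrightarrow> j < n \<Longrightarrow> \<sigma> j \<in> red a"
  unfolding red_env_def by (auto simp: nth_single_ctx)

lemma red_env_append:
  assumes "red_env \<sigma> n D" "length D = n" "\<forall>x\<in>set as. N \<in> red x"
  shows "red_env (case_nat N \<sigma>) (Suc n) (D @ [as])"
  unfolding red_env_def
proof (intro allI impI ballI)
  fix j x
  assume j: "j < Suc n" and x: "x \<in> set ((D @ [as]) ! (Suc n - 1 - j))"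
  show "case_nat N \<sigma> j \<in> red x"
  proof (cases j)
    case 0
    then show ?thesis
      using x assms(2,3) by (simp add: nth_append)
  next
    case (Suc i)
    then have "x \<in> set (D ! (n - 1 - i))"
      using j x assms(2) by (simp add: nth_append)
    then show ?thesis
      using assms(1) j Suc unfolding red_env_def by simp
  qed
qed

lemma inhabited_psubst_red: "inhabited C A M n D a \<Longrightarrow> red_env \<sigma> n D \<Longrightarrow> psubst \<sigma> M \<in> red a"
proof (induct arbitrary: \<sigma> rule: inhabited.induct)
  case (inhabited_Var j n D a)
  then have "red_env \<sigma> n (single_ctx n (n - 1 - j) a)"
    using red_env_ctxle by fastforce
  then show ?case
    using inhabited_Var(1) red_env_single_ctx by simp
next
  case (inhabited_Abs P n D as b)
  have lD: "length D = n"
    using inhabited_length[OF inhabited_Abs(1)] by simp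
  have "App (Abs (psubst (subst_up \<sigma>) P)) N \<in> red b" if N: "\<forall>x\<in>set as. N \<in> red x" for N
  proof -
    have "psubst (case_nat N \<sigma>) P \<in> red b"
      using inhabited_Abs(2) red_env_append[OF inhabited_Abs(3) lD N] by blast
    moreover have "(\<lambda>j. subst (subst_up \<sigma> j) N 0) = case_nat N \<sigma>"
      by (rule ext) (simp split: nat.split)
    ultimately have "subst (psubst (subst_up \<sigma>) P) N 0 \<in> red b"
      using psubst_subst by metis
    then show ?thesis
      using red_expand[of _ N "[]"] by simp
  qed
  then show ?case by simp
next
  case (inhabited_App n G0 ps Q P a D)
  have env: "red_env \<sigma> n G" if "G \<in> set (G0 # map snd ps)" for G
    using red_env_ctx_tensor[OF red_env_ctxle[OF inhabited_App(5) _ inhabited_App(6)]] that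
    by simp
  have "psubst \<sigma> P \<in> red (Arr (map fst ps) a)"
    using inhabited_App(4) env by simp
  moreover have "psubst \<sigma> Q \<in> red x" if x: "x \<in> set (map fst ps)" for x
  proof -
    obtain G where xG: "(x, G) \<in> set ps"
      using x by force
    from bspec[OF inhabited_App(2) xG]
    have "\<forall>\<sigma>. red_env \<sigma> n G \<longrightarrow> psubst \<sigma> Q \<in> red x"
      by simp
    moreover have "G \<in> set (G0 # map snd ps)"
      using xG by force
    ultimately show ?thesis
      using env by blast
  qed
  ultimately show ?case by simp
qed

lemma inhabited_head_reduction_ends:
  assumes "inhabited C A M n D a"
  shows "head_reduction_ends M"
proof -
  have "red_env Var n D"
    unfolding red_env_def by (simp add: head_var_in_red)
  then have "psubst Var M \<in> red a"
    by (rule inhabited_psubst_red[OF assms])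
  then show ?thesis
    using head_reduction_ends_if_red by (simp add: psubst_Var)
qed

section \<open>Subject expansion\<close>

lemma inhabited_lift_remove_at:
  "inhabited C A (lift t k) (Suc n) G b \<Longrightarrow> k \<le> n \<Longrightarrow> inhabited C A t n (remove_at (n - k) G) b"
proof (induct t arbitrary: k n G b)
  case (Var i)
  show ?case
  proof (cases "i < k")
    case True
    then have "inhabited C A (Var i) (Suc n) G b" using Var by simp
    then have c: "ctxle C A G (single_ctx (Suc n) (Suc n - 1 - i) b)" by (auto elim: inhabited_VarE)
    have "i < n"
      using True Var(2) by simp
    moreover have "ctxle C A (remove_at (n - k) G) (single_ctx n (n - 1 - i) b)"
      using ctxle_remove_at[OF c, of "n - k"] remove_at_single_ctx_less[OF True Var(2), of b]
      by metis
    ultimately show ?thesis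
      by (rule inhabited_Var)
  next
    case False
    then have "inhabited C A (Var (Suc i)) (Suc n) G b" using Var by simp
    then have c: "ctxle C A G (single_ctx (Suc n) (Suc n - 1 - Suc i) b)" and l: "Suc i < Suc n"
      by (auto elim: inhabited_VarE)
    have "i < n"
      using l by simp
    moreover have "ctxle C A (remove_at (n - k) G) (single_ctx n (n - 1 - i) b)"
      using ctxle_remove_at[OF c, of "n - k"] remove_at_single_ctx_ge[of k i n b] False l Var(2)
      by (metis not_less)
    ultimately show ?thesis
      by (rule inhabited_Var)
  qed
next
  case (App s u)
  from App(3) have "inhabited C A (App (lift s k) (lift u k)) (Suc n) G b" by simp
  then obtain G0 ps where G0: "is_ctx A (Suc n) G0"
    and ps: "inhabited_all C A (lift u k) (Suc n) ps"
    and tps: "inhabited C A (lift s k) (Suc n) G0 (Arr (map fst ps) b)"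
    and cl: "ctxle C A G (ctx_tensor (Suc n) (G0 # map snd ps))"
    by (auto elim: inhabited_AppE)
  let ?p = "n - k"
  let ?ps = "map (\<lambda>x. (fst x, remove_at ?p (snd x))) ps"
  have p: "?p < Suc n" by simp
  have "is_ctx A n (remove_at ?p G0)" using is_ctx_remove_at[OF G0 p] .
  moreover have "inhabited_all C A u n ?ps"
    using ps App(2)[OF _ App(4)] is_ctx_remove_at[OF _ p] by fastforce
  moreover have "inhabited C A s n (remove_at ?p G0) (Arr (map fst ?ps) b)"
    using App(1)[OF tps App(4)] by (simp add: comp_def)
  moreover have "ctxle C A (remove_at ?p G) (ctx_tensor n (remove_at ?p G0 # map snd ?ps))"
  proof -
    have "\<forall>K\<in>set (G0 # map snd ps). length K = Suc n"
      using G0 ps unfolding is_ctx_def by auto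
    then have "remove_at ?p (ctx_tensor (Suc n) (G0 # map snd ps))
        = ctx_tensor n (map (remove_at ?p) (G0 # map snd ps))"
      using remove_at_ctx_tensor p by blast
    then show ?thesis using ctxle_remove_at[OF cl, of ?p] by (simp add: comp_def)
  qed
  ultimately show ?case by (rule inhabited_App)
next
  case (Abs s)
  from Abs(2) have "inhabited C A (Abs (lift s (Suc k))) (Suc n) G b" by simp
  then obtain as b' where b: "b = Arr as b'"
    and t: "inhabited C A (lift s (Suc k)) (Suc (Suc n)) (G @ [as]) b'"
    by (auto elim: inhabited_AbsE)
  have lG: "length G = Suc n" using Abs(2) inhabited_length by fastforce
  have "inhabited C A s (Suc n) (remove_at (Suc n - Suc k) (G @ [as])) b'"
    using Abs(1)[OF t] Abs(3) by simp
  then have "inhabited C A s (Suc n) (remove_at (n - k) G @ [as]) b'"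
    using lG remove_at_append[of "n - k" G as] by simp
  then show ?case unfolding b by (rule inhabited_Abs)
qed

(* Surjective index maps allow no weakening, so a vacuous variable gets the empty list of types. *)
lemma inhabited_lift_unused:
  "C = Bijections \<or> C = Surjections \<Longrightarrow> inhabited C A (lift t k) (Suc n) G b \<Longrightarrow>
      k \<le> n \<Longrightarrow> G ! (n - k) = []"
proof (induct t arbitrary: k n G b)
  case (Var i)
  have lG: "length G = Suc n" using Var(2) inhabited_length by fastforce
  obtain q where "ctxle C A G (single_ctx (Suc n) q b)" "q \<noteq> n - k"
  proof (cases "i < k")
    case True
    then have "inhabited C A (Var i) (Suc n) G b" using Var by simp
    then have "ctxle C A G (single_ctx (Suc n) (Suc n - 1 - i) b)" by (auto elim: inhabited_VarE)
    then show ?thesis using that True Var(3) by simp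
  next
    case False
    then have "inhabited C A (Var (Suc i)) (Suc n) G b" using Var by simp
    then have "ctxle C A G (single_ctx (Suc n) (Suc n - 1 - Suc i) b)" "Suc i < Suc n"
      by (auto elim: inhabited_VarE)
    then show ?thesis using that False Var(3) by simp
  qed
  then have "sdle C A (G ! (n - k)) (single_ctx (Suc n) q b ! (n - k))"
    using ctxle_nth[of C A G _ "n - k"] by simp
  then have "sdle C A (G ! (n - k)) []"
    using \<open>q \<noteq> n - k\<close> by (simp add: nth_single_ctx)
  then show ?case using sdle_Nil_right Var(1) by blast
next
  case (App s u)
  from App(4) have "inhabited C A (App (lift s k) (lift u k)) (Suc n) G b" by simp
  then obtain G0 ps where G0: "is_ctx A (Suc n) G0"
    and ps: "inhabited_all C A (lift u k) (Suc n) ps"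
    and tps: "inhabited C A (lift s k) (Suc n) G0 (Arr (map fst ps) b)"
    and cl: "ctxle C A G (ctx_tensor (Suc n) (G0 # map snd ps))"
    by (auto elim: inhabited_AppE)
  have "G0 ! (n - k) = []" using App(1)[OF App(3) tps App(5)] .
  moreover have "\<forall>K\<in>set (map snd ps). K ! (n - k) = []"
  proof
    fix K assume "K \<in> set (map snd ps)"
    then obtain c where "(c, K) \<in> set ps" by auto
    then have "inhabited C A (lift u k) (Suc n) K c" using ps by auto
    then show "K ! (n - k) = []" using App(2)[OF App(3) _ App(5)] by blast
  qed
  ultimately have "ctx_tensor (Suc n) (G0 # map snd ps) ! (n - k) = []"
    by (simp add: nth_ctx_tensor)
  then have "sdle C A (G ! (n - k)) []" using ctxle_nth[OF cl, of "n - k"] by simp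
  then show ?case using sdle_Nil_right App(3) by blast
next
  case (Abs s)
  from Abs(3) have "inhabited C A (Abs (lift s (Suc k))) (Suc n) G b" by simp
  then obtain as b' where t: "inhabited C A (lift s (Suc k)) (Suc (Suc n)) (G @ [as]) b'"
    by (auto elim: inhabited_AbsE)
  have lG: "length G = Suc n" using Abs(3) inhabited_length by fastforce
  have "(G @ [as]) ! (Suc n - Suc k) = []" using Abs(1)[OF Abs(2) t] Abs(4) by simp
  moreover have "n - k < length G" using lG by simp
  ultimately show ?case by (simp add: nth_append)
qed

lemma sdle_append_unused:
  assumes le: "sdle C A xs (ys @ concat (map (\<lambda>G. G ! n) Gs))"
    and Gs: "\<forall>G\<in>set Gs. \<exists>c. inhabited C A (lift t 0) (Suc n) G c"
  shows "sdle C A xs ys"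
proof (cases "C = Bijections \<or> C = Surjections")
  case True
  have "G ! n = []" if G: "G \<in> set Gs" for G
  proof -
    obtain c where "inhabited C A (lift t 0) (Suc n) G c"
      using Gs G by blast
    from inhabited_lift_unused[OF True this] show ?thesis
      by simp
  qed
  then have "concat (map (\<lambda>G. G ! n) Gs) = []"
    by simp
  then show ?thesis
    using le by (metis append.right_neutral)
next
  case False
  then have "C = Injections \<or> C = AllFunctions"
    by (cases C) auto
  then show ?thesis
    using sdle_take[OF le] by blast
qed

(* Index k of a context of length Suc n sits at position n - k. *)
definition subst_decomposable ::
  "fclass \<Rightarrow> ('o, 'm) category \<Rightarrow> dB \<Rightarrow> dB \<Rightarrow> nat \<Rightarrow> nat \<Rightarrow> 'o dty list list \<Rightarrow> 'o dty \<Rightarrow> bool"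
  where
  "subst_decomposable C A s t k n D a \<longleftrightarrow> (\<exists>G0 ps. is_ctx A n G0 \<and> inhabited_all C A t n ps \<and>
     inhabited C A s (Suc n) (insert_at (n - k) (map fst ps) G0) a \<and>
     ctxle C A D (ctx_tensor n (G0 # map snd ps)))"

lemma subst_decomposable_Nil:
  assumes "is_category A" "is_ctx A n D" "inhabited C A s (Suc n) (insert_at (n - k) [] D) a"
  shows "subst_decomposable C A s t k n D a"
proof -
  have "ctxle C A D (ctx_tensor n [D])"
    using ctxle_refl[OF assms(1,2)] ctx_tensor_single[of D n] assms(2)
    unfolding is_ctx_def by simp
  then show ?thesis
    unfolding subst_decomposable_def using assms(2,3)
    by (intro exI[of _ D] exI[of _ "[]"]) auto
qed

lemma subst_decomposable_Var:
  assumes cat: "is_category A" and M: "inhabited C A (subst (Var j) t k) n D a"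
    and k: "k \<le> n" and D: "is_ctx A n D" and a: "dobj A a"
  shows "subst_decomposable C A (Var j) t k n D a"
proof -
  consider "j = k" | "j < k" | "k < j"
    by linarith
  then show ?thesis
  proof cases
    case 1
    then have t: "inhabited C A t n D a"
      using M by simp
    have "ctxle C A (insert_at (n - k) [a] (replicate n [])) (single_ctx (Suc n) (Suc n - 1 - k) a)"
      using insert_at_replicate_Nil[OF k, of a] ctxle_refl[OF cat is_ctx_single_ctx[OF a]]
      by fastforce
    then have
      "inhabited C A (Var j) (Suc n) (insert_at (n - k) (map fst [(a, D)]) (replicate n [])) a"
      using 1 k by (auto intro: inhabited_Var)
    moreover have "ctxle C A D (ctx_tensor n (replicate n [] # map snd [(a, D)]))"
      using ctxle_refl[OF cat D] D ctx_tensor_single[of D n]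
      by (simp add: is_ctx_def ctx_tensor_replicate_Nil)
    ultimately show ?thesis
      unfolding subst_decomposable_def using t D a is_ctx_replicate
      by (intro exI[of _ "replicate n []"] exI[of _ "[(a, D)]"]) auto
  next
    case 2
    then have "inhabited C A (Var j) n D a"
      using M by simp
    then have j: "j < n" and c: "ctxle C A D (single_ctx n (n - 1 - j) a)"
      by (auto elim: inhabited_VarE)
    have "ctxle C A (insert_at (n - k) [] D) (insert_at (n - k) [] (single_ctx n (n - 1 - j) a))"
      using c sdle_Nil unfolding ctxle_def by (rule list_all2_insert_at)
    then have "ctxle C A (insert_at (n - k) [] D) (single_ctx (Suc n) (Suc n - 1 - j) a)"
      unfolding insert_at_single_ctx_less[OF 2 k] .
    then show ?thesis
      using j by (intro subst_decomposable_Nil[OF cat D] inhabited_Var) auto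
  next
    case 3
    then have "inhabited C A (Var (j - 1)) n D a"
      using M by simp
    then have j: "j - 1 < n" and c: "ctxle C A D (single_ctx n (n - 1 - (j - 1)) a)"
      by (auto elim: inhabited_VarE)
    have jn: "j \<le> n"
      using j 3 by simp
    have "ctxle C A (insert_at (n - k) [] D)
        (insert_at (n - k) [] (single_ctx n (n - 1 - (j - 1)) a))"
      using c sdle_Nil unfolding ctxle_def by (rule list_all2_insert_at)
    then have "ctxle C A (insert_at (n - k) [] D) (single_ctx (Suc n) (Suc n - 1 - j) a)"
      unfolding insert_at_single_ctx_greater[OF 3 jn] .
    then show ?thesis
      using j by (intro subst_decomposable_Nil[OF cat D] inhabited_Var) auto
  qed
qed

lemma inhabited_App_insert_at:
  assumes cat: "is_category A" and p: "p \<le> n"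
    and H: "\<forall>(xs, H)\<in>set ((xs0, H0) # map snd ws). is_ctx A n H \<and> sdobj A xs"
    and u: "inhabited C A u (Suc n) (insert_at p xs0 H0) (Arr (map fst ws) a)"
    and v: "\<forall>(b, xs, H)\<in>set ws. dobj A b \<and> inhabited C A v (Suc n) (insert_at p xs H) b"
  shows "inhabited C A (App u v) (Suc n) (insert_at p (xs0 @ concat (map (fst \<circ> snd) ws))
      (ctx_tensor n (H0 # map (snd \<circ> snd) ws))) a"
proof -
  let ?G0 = "insert_at p xs0 H0"
  let ?ps = "map (\<lambda>(b, xs, H). (b, insert_at p xs H)) ws"
  let ?D = "insert_at p (xs0 @ concat (map (fst \<circ> snd) ws))
    (ctx_tensor n (H0 # map (snd \<circ> snd) ws))"
  have "\<forall>x\<in>set ((xs0, H0) # map snd ws). length (snd x) = n"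
    using H unfolding is_ctx_def by auto
  from ctx_tensor_insert_at[OF this p]
  have "ctx_tensor (Suc n) (?G0 # map snd ?ps) = ?D"
    by (simp add: comp_def case_prod_beta)
  moreover have "is_ctx A (Suc n) ?D"
    using H p by (intro is_ctx_insert_at is_ctx_ctx_tensor) (auto simp: sdobj_def)
  ultimately have le: "ctxle C A ?D (ctx_tensor (Suc n) (?G0 # map snd ?ps))"
    using ctxle_refl[OF cat] by metis
  have G0: "is_ctx A (Suc n) ?G0"
    using H p by (simp add: is_ctx_insert_at)
  have ps: "inhabited_all C A v (Suc n) ?ps"
    using H v p by (auto simp: is_ctx_insert_at)
  have "inhabited C A u (Suc n) ?G0 (Arr (map fst ?ps) a)"
    using u by (simp add: comp_def case_prod_beta)
  from inhabited_App[OF G0 ps this le] show ?thesis .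
qed

lemma subst_decomposable_App:
  assumes cat: "is_category A" and k: "k \<le> n" and G0: "is_ctx A n G0"
    and ps: "\<forall>(b, G)\<in>set ps. is_ctx A n G \<and> dobj A b \<and> subst_decomposable C A v t k n G b"
    and u: "subst_decomposable C A u t k n G0 (Arr (map fst ps) a)"
    and D: "ctxle C A D (ctx_tensor n (G0 # map snd ps))"
  shows "subst_decomposable C A (App u v) t k n D a"
proof -
  let ?p = "n - k"
  obtain H0 q0 where H0: "is_ctx A n H0"
    and q0: "inhabited_all C A t n q0"
    and u': "inhabited C A u (Suc n) (insert_at ?p (map fst q0) H0) (Arr (map fst ps) a)"
    and G0_le: "ctxle C A G0 (ctx_tensor n (H0 # map snd q0))"
    using u unfolding subst_decomposable_def by blast
  have "\<forall>x\<in>set ps. \<exists>Hq. is_ctx A n (fst Hq) \<and> inhabited_all C A t n (snd Hq) \<and>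
      inhabited C A v (Suc n) (insert_at ?p (map fst (snd Hq)) (fst Hq)) (fst x) \<and>
      ctxle C A (snd x) (ctx_tensor n (fst Hq # map snd (snd Hq)))"
    using ps unfolding subst_decomposable_def by fastforce
  then obtain f where f: "\<forall>x\<in>set ps. is_ctx A n (fst (f x)) \<and> inhabited_all C A t n (snd (f x)) \<and>
      inhabited C A v (Suc n) (insert_at ?p (map fst (snd (f x))) (fst (f x))) (fst x) \<and>
      ctxle C A (snd x) (ctx_tensor n (fst (f x) # map snd (snd (f x))))"
    by (rule bchoice[elim_format]) blast
  define heads where "heads = H0 # map (fst \<circ> f) ps"
  define allq where "allq = q0 @ concat (map (snd \<circ> f) ps)"
  have heads: "\<forall>H\<in>set heads. is_ctx A n H"
    using H0 f unfolding heads_def by auto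
  have allq: "inhabited_all C A t n allq"
    using q0 f unfolding allq_def by fastforce
  have "inhabited C A (App u v) (Suc n) (insert_at ?p (map fst allq) (ctx_tensor n heads)) a"
  proof -
    let ?ws = "map (\<lambda>x. (fst x, map fst (snd (f x)), fst (f x))) ps"
    have Hs: "\<forall>(xs, H)\<in>set ((map fst q0, H0) # map snd ?ws). is_ctx A n H \<and> sdobj A xs"
      using H0 q0 f by (fastforce simp: sdobj_def)
    have vs: "\<forall>(b, xs, H)\<in>set ?ws. dobj A b \<and> inhabited C A v (Suc n) (insert_at ?p xs H) b"
      using ps f by fastforce
    have "inhabited C A u (Suc n) (insert_at ?p (map fst q0) H0) (Arr (map fst ?ws) a)"
      using u' by (simp add: comp_def)
    from inhabited_App_insert_at[OF cat diff_le_self Hs this vs]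
    show ?thesis
      unfolding allq_def heads_def by (simp add: comp_def map_concat)
  qed
  moreover have "ctxle C A D (ctx_tensor n (ctx_tensor n heads # map snd allq))"
  proof -
    let ?Kss = "(H0 # map snd q0) # map (\<lambda>x. fst (f x) # map snd (snd (f x))) ps"
    have "list_all2 (\<lambda>G Ks. ctxle C A G (ctx_tensor n Ks)) (G0 # map snd ps) ?Kss"
      using G0_le f by (simp add: list_all2_map1 list_all2_map2 list_all2_same)
    moreover have "\<forall>G\<in>set (G0 # map snd ps). length G = n"
      using G0 ps unfolding is_ctx_def by auto
    moreover have "mset (concat ?Kss) = mset (heads @ map snd allq)"
      unfolding heads_def allq_def by (simp add: mset_concat_heads map_concat comp_def)
    moreover have "\<forall>L\<in>set (heads @ map snd allq). is_ctx A n L"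
      using heads allq by auto
    ultimately have
      "ctxle C A (ctx_tensor n (G0 # map snd ps)) (ctx_tensor n (heads @ map snd allq))"
      by (rule ctxle_ctx_tensor_regroup[OF cat])
    then show ?thesis
      using D ctxle_trans[OF cat] ctx_tensor_Cons_ctx_tensor by metis
  qed
  ultimately show ?thesis
    unfolding subst_decomposable_def using is_ctx_ctx_tensor[OF heads] allq by blast
qed

lemma subst_decomposable_Abs:
  assumes cat: "is_category A" and k: "k \<le> n" and D: "is_ctx A n D"
    and as: "sdobj A as" and b: "dobj A b"
    and s: "subst_decomposable C A s (lift t 0) (Suc k) (Suc n) (D @ [as]) b"
  shows "subst_decomposable C A (Abs s) t k n D (Arr as b)"
proof -
  obtain G0 ps where G0: "is_ctx A (Suc n) G0"
    and ps: "inhabited_all C A (lift t 0) (Suc n) ps"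
    and s': "inhabited C A s (Suc (Suc n)) (insert_at (n - k) (map fst ps) G0) b"
    and le: "ctxle C A (D @ [as]) (ctx_tensor (Suc n) (G0 # map snd ps))"
    using s unfolding subst_decomposable_def by auto
  have lD: "length D = n"
    using D unfolding is_ctx_def by simp
  define G0' where "G0' = take n G0"
  define g where "g = G0 ! n"
  define ps' where "ps' = map (\<lambda>x. (fst x, take n (snd x))) ps"
  define E where "E = insert_at (n - k) (map fst ps) G0'"
  have G0': "is_ctx A n G0'"
    unfolding G0'_def using is_ctx_take[OF G0] .
  have lG0': "length G0' = n"
    using G0' unfolding is_ctx_def by simp
  have G0_eq: "G0 = G0' @ [g]"
    using G0 take_Suc_conv_app_nth[of n G0] unfolding G0'_def g_def is_ctx_def by simp
  have ps': "inhabited_all C A t n ps'"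
    using ps inhabited_lift_remove_at[of C A t 0 n] remove_at_last is_ctx_take
    unfolding ps'_def is_ctx_def by fastforce
  have E: "is_ctx A (Suc n) E"
    unfolding E_def using ps by (intro is_ctx_insert_at[OF G0']) (auto simp: sdobj_def)
  have "sdle C A as (g @ concat (map (\<lambda>G. G ! n) (map snd ps)))"
    using le lD lG0' unfolding ctxle_def list_all2_conv_all_nth
    by (auto simp: nth_ctx_tensor G0_eq nth_append dest!: spec[of _ n])
  then have "sdle C A as g"
    by (rule sdle_append_unused[where t = t]) (use ps in fastforce)
  then have "ctxle C A (E @ [as]) (E @ [g])"
    using ctxle_refl[OF cat E] unfolding ctxle_def by (simp add: list_all2_appendI)
  moreover have "inhabited C A s (Suc (Suc n)) (E @ [g]) b"
    using s' lG0' insert_at_append[of "n - k" G0' "map fst ps" g] unfolding E_def G0_eq by simp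
  moreover have "is_ctx A (Suc (Suc n)) (E @ [g])"
    using is_ctx_append[OF E is_ctx_last[OF G0]] unfolding g_def .
  ultimately have "inhabited C A s (Suc (Suc n)) (E @ [as]) b"
    using inhabited_ctxle[OF cat] b by blast
  then have "inhabited C A (Abs s) (Suc n) (insert_at (n - k) (map fst ps') G0') (Arr as b)"
    unfolding E_def ps'_def by (simp add: comp_def inhabited_Abs)
  moreover have "ctxle C A D (ctx_tensor n (G0' # map snd ps'))"
    using list_all2_takeI[OF le[unfolded ctxle_def], of n] lD
    by (simp add: ctxle_def take_ctx_tensor G0'_def ps'_def comp_def)
  ultimately show ?thesis
    unfolding subst_decomposable_def using G0' ps' by blast
qed

lemma inhabited_subst_decomposable:
  assumes cat: "is_category A"
  shows "inhabited C A (subst s t k) n D a \<Longrightarrow> k \<le> n \<Longrightarrow> is_ctx A n D \<Longrightarrow> dobj A a \<Longrightarrow>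
    subst_decomposable C A s t k n D a"
proof (induct s arbitrary: t k n D a)
  case (Var j)
  then show ?case by (rule subst_decomposable_Var[OF cat])
next
  case (App u v)
  from App.prems(1) obtain G0 ps where G0: "is_ctx A n G0"
    and ps: "inhabited_all C A (subst v t k) n ps"
    and u: "inhabited C A (subst u t k) n G0 (Arr (map fst ps) a)"
    and D: "ctxle C A D (ctx_tensor n (G0 # map snd ps))"
    by (auto elim: inhabited_AppE)
  have "dobj A (Arr (map fst ps) a)"
    using ps App.prems(4) by auto
  then have "subst_decomposable C A u t k n G0 (Arr (map fst ps) a)"
    using App.hyps(1)[OF u App.prems(2) G0] by blast
  moreover have "\<forall>(b, G)\<in>set ps. is_ctx A n G \<and> dobj A b \<and> subst_decomposable C A v t k n G b"
    using ps App.hyps(2) App.prems(2) by fastforce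
  ultimately show ?case
    using subst_decomposable_App[OF cat App.prems(2) G0 _ _ D] by blast
next
  case (Abs s)
  from Abs.prems(1) obtain as b where a: "a = Arr as b"
    and s: "inhabited C A (subst s (lift t 0) (Suc k)) (Suc n) (D @ [as]) b"
    by (auto elim: inhabited_AbsE)
  have as: "sdobj A as" and b: "dobj A b"
    using Abs.prems(4) a by (auto simp: sdobj_def)
  have "subst_decomposable C A s (lift t 0) (Suc k) (Suc n) (D @ [as]) b"
    using Abs.hyps[OF s _ is_ctx_append[OF Abs.prems(3) as] b] Abs.prems(2) by simp
  then show ?case
    unfolding a by (rule subst_decomposable_Abs[OF cat Abs.prems(2,3) as b])
qed

lemma inhabited_beta_expand:
  assumes cat: "is_category A"
  shows "beta M N \<Longrightarrow> inhabited C A N n D a \<Longrightarrow> is_ctx A n D \<Longrightarrow> dobj A a \<Longrightarrow> inhabited C A M n D a"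
proof (induct arbitrary: n D a rule: beta.induct)
  case (beta_redex s t)
  obtain G0 ps where G0: "is_ctx A n G0"
    and ps: "inhabited_all C A t n ps"
    and ts: "inhabited C A s (Suc n) (insert_at (n - 0) (map fst ps) G0) a"
    and cl: "ctxle C A D (ctx_tensor n (G0 # map snd ps))"
    using inhabited_subst_decomposable[OF cat beta_redex(1) _ beta_redex(2,3)]
    unfolding subst_decomposable_def by blast
  have "length G0 = n" using G0 unfolding is_ctx_def by simp
  then have "inhabited C A s (Suc n) (G0 @ [map fst ps]) a" using ts insert_at_length[of G0] by simp
  then have "inhabited C A (Abs s) n G0 (Arr (map fst ps) a)" by (rule inhabited_Abs)
  then show ?case using G0 ps cl by (blast intro: inhabited_App)
next
  case (beta_appL s t u)
  from beta_appL(3) obtain G0 ps where G0: "is_ctx A n G0"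
    and ps: "inhabited_all C A u n ps"
    and tt: "inhabited C A t n G0 (Arr (map fst ps) a)"
    and cl: "ctxle C A D (ctx_tensor n (G0 # map snd ps))"
    by (auto elim: inhabited_AppE)
  have "dobj A (Arr (map fst ps) a)" using ps beta_appL(5) by auto
  then have "inhabited C A s n G0 (Arr (map fst ps) a)" using beta_appL(2)[OF tt G0] by blast
  then show ?case using G0 ps cl by (blast intro: inhabited_App)
next
  case (beta_appR s t u)
  from beta_appR(3) obtain G0 ps where G0: "is_ctx A n G0"
    and ps: "inhabited_all C A t n ps"
    and tt: "inhabited C A u n G0 (Arr (map fst ps) a)"
    and cl: "ctxle C A D (ctx_tensor n (G0 # map snd ps))"
    by (auto elim: inhabited_AppE)
  have "inhabited_all C A s n ps"
    using ps beta_appR(2) by fastforce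
  then show ?case using G0 tt cl by (blast intro: inhabited_App)
next
  case (beta_abs s t)
  from beta_abs(3) obtain as b where a: "a = Arr as b"
    and tt: "inhabited C A t (Suc n) (D @ [as]) b"
    by (auto elim: inhabited_AbsE)
  have "sdobj A as" "dobj A b" using beta_abs(5) a by (auto simp: sdobj_def)
  then have "inhabited C A s (Suc n) (D @ [as]) b"
    using beta_abs(2)[OF tt is_ctx_append[OF beta_abs(4)]] by blast
  then show ?case unfolding a by (rule inhabited_Abs)
qed

lemma inhabited_beta_star_expand:
  assumes cat: "is_category A"
  shows "beta\<^sup>*\<^sup>* M N \<Longrightarrow> inhabited C A N n D a \<Longrightarrow> is_ctx A n D \<Longrightarrow> dobj A a \<Longrightarrow> inhabited C A M n D a"
proof (induct rule: rtranclp_induct)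
  case base then show ?case by simp
next
  case (step y z)
  then show ?case using inhabited_beta_expand[OF cat step(2)] by blast
qed

section \<open>Head normal forms\<close>

lemma head_var_inhabited:
  assumes cat: "is_category A"
  shows "head_var N \<Longrightarrow> closed_at n N \<Longrightarrow> dobj A a \<Longrightarrow> \<exists>D. is_ctx A n D \<and> inhabited C A N n D a"
proof (induct N arbitrary: a)
  case (Var j)
  then have j: "j < n" by simp
  have ic: "is_ctx A n (single_ctx n (n - 1 - j) a)" using is_ctx_single_ctx[OF Var(3)] j by simp
  then have "inhabited C A (Var j) n (single_ctx n (n - 1 - j) a) a"
    using j ctxle_refl[OF cat ic] by (blast intro: inhabited_Var)
  then show ?case using ic by blast
next
  case (App s t)
  have "dobj A (Arr [] a)" using App(5) by simp
  moreover have "head_var s" "closed_at n s" using App(3,4) by simp_all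
  ultimately obtain D where D: "is_ctx A n D" "inhabited C A s n D (Arr [] a)" using App(1) by blast
  have lD: "length D = n" using D(1) unfolding is_ctx_def by simp
  have cl: "ctxle C A D (ctx_tensor n [D])"
    using ctxle_refl[OF cat D(1)] ctx_tensor_single[OF lD] by metis
  have "inhabited C A (App s t) n D a"
    by (rule inhabited_App[where ps="[]"]) (use D cl in simp_all)
  then show ?case using D by blast
next
  case (Abs s) then show ?case by simp
qed

lemma hnf_inhabited:
  assumes cat: "is_category A" and ob: "Ob A \<noteq> {}"
  shows "is_hnf N \<Longrightarrow> closed_at n N \<Longrightarrow> \<exists>D a. is_ctx A n D \<and> dobj A a \<and> inhabited C A N n D a"
proof (induct N arbitrary: n)
  case (Abs s)
  then have "is_hnf s" "closed_at (Suc n) s"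
    by simp_all
  then obtain D a where D: "is_ctx A (Suc n) D" "dobj A a" "inhabited C A s (Suc n) D a"
    using Abs.hyps by blast
  have "D = take n D @ [D ! n]"
    using D(1) take_Suc_conv_app_nth[of n D] unfolding is_ctx_def by simp
  then have "inhabited C A (Abs s) n (take n D) (Arr (D ! n) a)"
    using D(3) inhabited_Abs by metis
  moreover have "dobj A (Arr (D ! n) a)"
    using is_ctx_last[OF D(1)] D(2) unfolding sdobj_def by simp
  ultimately show ?case
    using is_ctx_take[OF D(1)] by blast
next
  case (Var j)
  obtain o' where "dobj A (Atom o')"
    using ob by auto
  then show ?case
    using head_var_inhabited[OF cat _ Var(2)] by fastforce
next
  case (App s t)
  obtain o' where "dobj A (Atom o')"
    using ob by auto
  then show ?case
    using head_var_inhabited[OF cat _ App(4)] App(3) by fastforce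
qed

theorem theorem5:
  fixes C :: fclass and A :: "('o, 'm) category" and M :: dB and n :: nat
  assumes "is_category A" and "Ob A \<noteq> {}" and "closed_at n M"
  shows "(den_nonzero C A M n \<longleftrightarrow> head_reduction_ends M) \<and>
         (head_reduction_ends M \<longleftrightarrow> head_normalizable M)"
proof -
  have "den_nonzero C A M n \<Longrightarrow> head_reduction_ends M"
    unfolding den_nonzero_iff_inhabited using inhabited_head_reduction_ends by blast
  moreover have "den_nonzero C A M n" if hn: "head_normalizable M"
  proof -
    obtain N where N: "beta\<^sup>*\<^sup>* M N" "is_hnf N"
      using hn unfolding head_normalizable_def by blast
    then obtain D a where D: "is_ctx A n D" "dobj A a" "inhabited C A N n D a"
      using hnf_inhabited[OF assms(1,2)] closed_at_beta_star[OF N(1) assms(3)] by blast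
    then show ?thesis
      unfolding den_nonzero_iff_inhabited
      using inhabited_beta_star_expand[OF assms(1) N(1)] by blast
  qed
  ultimately show ?thesis
    using head_normalizable_if_head_reduction_ends by blast
qed

end
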